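(* Under Rayleigh fading (all $m_{ij}=1$), for every target rate $r>0$, $P_{\rm r}>0$ and $\mathcal C_x\in[0,1)$, \[ \mathcal P_{\rm sr}(P_{\rm r},\mathcal C_x)\le 1-\exp\!\left(-\frac{P_{\rm r}\pi_{\rm rr}+1}{P_{\rm s}\pi_{\rm sr}}\Psi_r(\alpha\,\mathcal C_x)\right)=:\mathcal P^{\rm UB}_{\rm sr,RF}(P_{\rm r},\mathcal C_x), \qquad \alpha=\frac{P_{\rm r}\pi_{\rm rr}}{P_{\rm r}\pi_{\rm rr}+1}. \]
   Context: Let $P_{\rm s}>0$, $P_{\rm r}>0$ be the source and relay transmit powers. Rayleigh fading: $g_{\rm sr},g_{\rm rr}$ are independent exponential random variables with means $\pi_{\rm sr},\pi_{\rm rr}>0$. For $\mathcal C_x\in[0,1)$ define $R_{\rm sr}(P_{\rm r},\mathcal C_x)=\tfrac12\log_2\frac{(P_{\rm s}g_{\rm sr}+P_{\rm r}g_{\rm rr}+1)^2-(P_{\rm r}g_{\rm rr}\mathcal C_x)^2}{(P_{\rm r}g_{\rm rr}+1)^2-(P_{\rm r}g_{\rm rr}\mathcal C_x)^2}$. For a target rate $r>0$ put $\gamma=2^{2r}-1$ and $\Psi_r(x)=\sqrt{1+\gamma(1-x^2)}-1$. The S–R outage probability is $\mathcal P_{\rm sr}=\mathbb P\{R_{\rm sr}<r\}$. *)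

theory Defs
  imports "HOL-Probability.Probability"
begin

definition R_sr :: "real \<Rightarrow> real \<Rightarrow> real \<Rightarrow> real \<Rightarrow> real \<Rightarrow> real" where
  "R_sr Ps Pr Cx gsr grr =
     (1/2) * log 2 (((Ps * gsr + Pr * grr + 1)^2 - (Pr * grr * Cx)^2) /
                    ((Pr * grr + 1)^2 - (Pr * grr * Cx)^2))"

definition Psi :: "real \<Rightarrow> real \<Rightarrow> real" where
  "Psi r x = sqrt (1 + (2 powr (2 * r) - 1) * (1 - x^2)) - 1"

definition gain_law :: "real \<Rightarrow> real \<Rightarrow> (real \<times> real) measure" where
  "gain_law pisr pirr =
     density lborel (exponential_density (1 / pisr)) \<Otimes>\<^sub>M
     density lborel (exponential_density (1 / pirr))"

definition P_sr :: "real \<Rightarrow> real \<Rightarrow> real \<Rightarrow> real \<Rightarrow> real \<Rightarrow> real \<Rightarrow> real" where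
  "P_sr Ps pisr pirr r Pr Cx =
     measure (gain_law pisr pirr) {(gsr, grr). R_sr Ps Pr Cx gsr grr < r}"

end

theory Submission
  imports Defs
begin

text \<open>
  For fixed \<open>g_rr\<close> the rate \<open>R_sr\<close> is increasing in \<open>g_sr\<close>, so outage means that \<open>g_sr\<close> lies
  below a threshold \<open>c(g_rr)\<close>, and \<open>P_sr = E[F(c(g_rr))]\<close> with \<open>F\<close> the exponential CDF of \<open>g_sr\<close>.
  The threshold is the square root of a quadratic with nonnegative discriminant minus an affine
  function, hence concave on \<open>[0, \<infinity>)\<close>; \<open>F\<close> is concave and increasing there, so \<open>F \<circ> c\<close> lies below
  a supporting line at the mean \<open>\<pi>_rr\<close>. Integrating that line against the exponential law of
  \<open>g_rr\<close> gives Jensen's bound \<open>F(c(\<pi>_rr))\<close>, which is the stated upper bound.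
\<close>

lemma sqrt_quadratic_le_tangent:
  fixes A B C m y :: real
  assumes "0 \<le> A" "0 \<le> B" "0 < C" "A * C \<le> B\<^sup>2" "0 \<le> m" "0 \<le> y"
  shows "sqrt (A * y\<^sup>2 + 2 * B * y + C) \<le>
    sqrt (A * m\<^sup>2 + 2 * B * m + C) + (A * m + B) / sqrt (A * m\<^sup>2 + 2 * B * m + C) * (y - m)"
proof -
  define Qy where "Qy = A * y\<^sup>2 + 2 * B * y + C"
  define Qm where "Qm = A * m\<^sup>2 + 2 * B * m + C"
  define N where "N = B * m + C + (A * m + B) * y"
  have "0 < Qm" "0 \<le> Qy" "0 \<le> N"
    using assms unfolding Qm_def Qy_def N_def by (simp_all add: add_nonneg_pos)
  have "N\<^sup>2 - Qy * Qm = (y - m)\<^sup>2 * (B\<^sup>2 - A * C)"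
    unfolding N_def Qy_def Qm_def by algebra
  then have "Qy * Qm \<le> N\<^sup>2"
    using assms(4) by (metis diff_ge_0_iff_ge zero_le_mult_iff zero_le_power2)
  then have "sqrt Qy * sqrt Qm \<le> N"
    using \<open>0 \<le> N\<close> by (simp add: real_sqrt_mult[symmetric] real_le_lsqrt)
  then have "sqrt Qy \<le> N / sqrt Qm"
    using \<open>0 < Qm\<close> by (simp add: pos_le_divide_eq)
  also have "N = sqrt Qm * sqrt Qm + (A * m + B) * (y - m)"
    using \<open>0 < Qm\<close> unfolding N_def Qm_def by (simp add: power2_eq_square algebra_simps)
  also have "\<dots> / sqrt Qm = sqrt Qm + (A * m + B) / sqrt Qm * (y - m)"
    using \<open>0 < Qm\<close> by (simp add: field_simps)
  finally show ?thesis
    unfolding Qy_def Qm_def .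
qed

lemma one_minus_exp_neg_le_tangent:
  fixes u v :: real
  shows "1 - exp (- u) \<le> 1 - exp (- v) + exp (- v) * (u - v)"
proof -
  have "exp (- v) * (1 + (v - u)) \<le> exp (- v) * exp (v - u)"
    using exp_ge_add_one_self[of "v - u"] by (intro mult_left_mono) auto
  also have "\<dots> = exp (- u)" by (simp flip: exp_add)
  finally show ?thesis by (simp add: algebra_simps)
qed

lemma erlang_CDF_0_le_tangent:
  fixes l u v d :: real
  assumes "0 < l" "0 \<le> u" "u \<le> v + d"
  shows "erlang_CDF 0 l u \<le> 1 - exp (- l * v) + l * exp (- l * v) * d"
proof -
  have "l * u - l * v \<le> l * d"
    using assms(1,3) by (simp flip: right_diff_distrib)
  then have slope_le: "exp (- (l * v)) * (l * u - l * v) \<le> l * exp (- l * v) * d"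
    by (simp add: mult_left_mono)
  have "erlang_CDF 0 l u = 1 - exp (- (l * u))"
    using assms(2) by (simp add: erlang_CDF_0)
  also have "\<dots> \<le> 1 - exp (- (l * v)) + exp (- (l * v)) * (l * u - l * v)"
    by (rule one_minus_exp_neg_le_tangent)
  also have "\<dots> \<le> 1 - exp (- l * v) + l * exp (- l * v) * d"
    using slope_le by simp
  finally show ?thesis .
qed

lemma has_bochner_integral_exponential_mean:
  assumes "0 < l"
  shows "has_bochner_integral (density lborel (exponential_density l)) (\<lambda>y. y) (1 / l)"
proof (rule has_bochner_integral_nn_integral)
  show "AE y in density lborel (exponential_density l). 0 \<le> y"
    by (subst AE_density) (auto intro!: AE_I2 simp: exponential_density_def)
  have "(\<integral>\<^sup>+ y. ennreal (exponential_density l y * y ^ 1) \<partial>lborel) = ennreal (1 / l)"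
    using nn_integral_erlang_ith_moment[OF assms, of 0 1] assms by simp
  then show "(\<integral>\<^sup>+ y. ennreal y \<partial>density lborel (exponential_density l)) = ennreal (1 / l)"
    using assms by (simp add: nn_integral_density ennreal_mult'[symmetric] exponential_density_nonneg)
qed (use assms in auto)

lemma measure_pair_le_affine_section_bound:
  fixes M2 :: "real measure"
  assumes "pair_prob_space M1 M2"
    and T: "T \<in> sets (M1 \<Otimes>\<^sub>M M2)"
    and mean: "has_bochner_integral M2 (\<lambda>y. y) \<mu>"
    and section_le: "AE y in M2. emeasure M1 ((\<lambda>x. (x, y)) -` T) \<le> ennreal (a + b * y)"
    and affine_nonneg: "AE y in M2. 0 \<le> a + b * y"
  shows "measure (M1 \<Otimes>\<^sub>M M2) T \<le> a + b * \<mu>"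
proof -
  interpret pair_prob_space M1 M2 by fact
  have "integrable M2 (\<lambda>y. y)" and "integral\<^sup>L M2 (\<lambda>y. y) = \<mu>"
    using mean by (auto intro: integrable.intros dest: has_bochner_integral_integral_eq)
  then have affine_int: "integrable M2 (\<lambda>y. a + b * y)"
    and affine_mean: "integral\<^sup>L M2 (\<lambda>y. a + b * y) = a + b * \<mu>"
    by (simp_all add: M2.prob_space)
  have "0 \<le> a + b * \<mu>"
    using integral_nonneg_AE[OF affine_nonneg] affine_mean by simp
  have "emeasure (M1 \<Otimes>\<^sub>M M2) T = (\<integral>\<^sup>+ y. emeasure M1 ((\<lambda>x. (x, y)) -` T) \<partial>M2)"
    by (rule emeasure_pair_measure_alt2[OF T])
  also have "\<dots> \<le> (\<integral>\<^sup>+ y. ennreal (a + b * y) \<partial>M2)"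
    using section_le by (rule nn_integral_mono_AE)
  also have "\<dots> = ennreal (a + b * \<mu>)"
    using affine_int affine_nonneg affine_mean by (simp add: nn_integral_eq_integral)
  finally show ?thesis
    using \<open>0 \<le> a + b * \<mu>\<close> by (simp add: emeasure_eq_measure)
qed

lemma power2_mult_le_power2:
  fixes u c :: real
  assumes "\<bar>c\<bar> \<le> 1"
  shows "(u * c)\<^sup>2 \<le> u\<^sup>2"
proof -
  have "c\<^sup>2 \<le> 1" using assms by (simp add: abs_square_le_1)
  then show ?thesis by (simp add: power_mult_distrib mult_left_le)
qed

text \<open>The parameter \<open>g\<close> plays the role of \<open>\<gamma> = 2\<^sup>2\<^sup>r - 1\<close>.\<close>

definition sr_outage_threshold :: "real \<Rightarrow> real \<Rightarrow> real \<Rightarrow> real \<Rightarrow> real \<Rightarrow> real" where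
  "sr_outage_threshold Ps Pr Cx g grr =
     (sqrt ((1 + g) * (Pr * grr + 1)\<^sup>2 - g * (Pr * grr * Cx)\<^sup>2) - Pr * grr - 1) / Ps"

lemma R_sr_less_imp_le_sr_outage_threshold:
  assumes "0 < Ps" "0 \<le> Pr" "0 \<le> grr" "\<bar>Cx\<bar> \<le> 1"
    and "R_sr Ps Pr Cx gsr grr < r"
  shows "gsr \<le> sr_outage_threshold Ps Pr Cx (2 powr (2 * r) - 1) grr"
proof (rule ccontr)
  define g where "g = 2 powr (2 * r) - 1"
  define u where "u = Pr * grr"
  define Q where "Q = (1 + g) * (u + 1)\<^sup>2 - g * (u * Cx)\<^sup>2"
  define D where "D = (u + 1)\<^sup>2 - (u * Cx)\<^sup>2"
  define N where "N = (Ps * gsr + u + 1)\<^sup>2 - (u * Cx)\<^sup>2"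
  assume "\<not> ?thesis"
  then have "(sqrt Q - u - 1) / Ps < gsr"
    unfolding sr_outage_threshold_def Q_def u_def g_def by simp
  then have "sqrt Q < Ps * gsr + u + 1"
    using assms(1) by (simp add: pos_divide_less_eq algebra_simps)
  have "0 \<le> u" using assms unfolding u_def by simp
  have "(u * Cx)\<^sup>2 \<le> u\<^sup>2"
    using assms(4) by (rule power2_mult_le_power2)
  moreover have "u\<^sup>2 < (u + 1)\<^sup>2" using \<open>0 \<le> u\<close> by (simp add: power_strict_mono)
  ultimately have "0 < D" unfolding D_def by linarith
  have Q_D: "Q - (u * Cx)\<^sup>2 = (1 + g) * D"
    unfolding Q_def D_def by (simp add: algebra_simps)
  have "1 + g = 2 powr (2 * r)" unfolding g_def by simp
  then have "0 < 1 + g" by simp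
  then have "0 \<le> Q"
    using Q_D \<open>0 < D\<close> by (smt (verit) mult_pos_pos zero_le_power2)
  then have "Q < (Ps * gsr + u + 1)\<^sup>2"
    using \<open>sqrt Q < Ps * gsr + u + 1\<close> real_sqrt_pow2[of Q] power_strict_mono[of "sqrt Q" _ 2]
    by simp
  then have "2 powr (2 * r) < N / D"
    using Q_D \<open>0 < D\<close> \<open>1 + g = 2 powr (2 * r)\<close> unfolding N_def
    by (simp add: pos_less_divide_eq)
  moreover have "0 < N / D"
    using calculation powr_gt_zero[of 2 "2 * r"] by linarith
  ultimately have "2 * r < log 2 (N / D)"
    by (simp add: less_log_iff)
  then have "r < R_sr Ps Pr Cx gsr grr"
    unfolding R_sr_def N_def D_def u_def by simp
  with assms(5) show False by simp
qed

lemma sr_outage_threshold_nonneg: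
  assumes "0 < Ps" "0 \<le> g" "0 \<le> Pr * grr" "\<bar>Cx\<bar> \<le> 1"
  shows "0 \<le> sr_outage_threshold Ps Pr Cx g grr"
proof -
  have "(Pr * grr * Cx)\<^sup>2 \<le> (Pr * grr)\<^sup>2"
    using assms(4) by (rule power2_mult_le_power2)
  also have "\<dots> \<le> (Pr * grr + 1)\<^sup>2"
    using assms(3) by (simp add: power_mono)
  finally have "(Pr * grr * Cx)\<^sup>2 \<le> (Pr * grr + 1)\<^sup>2" .
  then have "(Pr * grr + 1)\<^sup>2 \<le> (1 + g) * (Pr * grr + 1)\<^sup>2 - g * (Pr * grr * Cx)\<^sup>2"
    using assms(2) by (simp add: algebra_simps mult_left_mono)
  then have "Pr * grr + 1 \<le> sqrt ((1 + g) * (Pr * grr + 1)\<^sup>2 - g * (Pr * grr * Cx)\<^sup>2)"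
    using assms(3) by (simp add: real_le_rsqrt)
  then show ?thesis
    using assms(1) unfolding sr_outage_threshold_def by simp
qed

lemma sr_outage_threshold_supergradient:
  assumes "0 < Ps" "0 \<le> Pr" "0 \<le> g" "\<bar>Cx\<bar> \<le> 1" "0 \<le> m"
  shows "\<exists>k. \<forall>y\<ge>0. sr_outage_threshold Ps Pr Cx g y \<le> sr_outage_threshold Ps Pr Cx g m + k * (y - m)"
proof -
  define A where "A = Pr\<^sup>2 * (1 + g - g * Cx\<^sup>2)"
  define B where "B = (1 + g) * Pr"
  define C where "C = 1 + g"
  define Q where "Q y = A * y\<^sup>2 + 2 * B * y + C" for y
  define slope where "slope = (A * m + B) / sqrt (Q m)"
  have Q_eq: "(1 + g) * (Pr * y + 1)\<^sup>2 - g * (Pr * y * Cx)\<^sup>2 = Q y" for y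
    unfolding Q_def A_def B_def C_def by (simp add: power2_eq_square algebra_simps)
  have "Cx\<^sup>2 \<le> 1" using assms(4) by (simp add: abs_square_le_1)
  then have "g * Cx\<^sup>2 \<le> g" using assms(3) by (simp add: mult_left_le)
  then have "0 \<le> A" unfolding A_def by simp
  moreover have "0 \<le> B" "0 < C" unfolding B_def C_def using assms(2,3) by simp_all
  moreover have "A * C \<le> B\<^sup>2"
  proof -
    have "B\<^sup>2 - A * C = (1 + g) * Pr\<^sup>2 * g * Cx\<^sup>2"
      unfolding A_def B_def C_def by (simp add: power2_eq_square algebra_simps)
    moreover have "0 \<le> (1 + g) * Pr\<^sup>2 * g * Cx\<^sup>2" using assms(3) by simp
    ultimately show ?thesis by linarith
  qed
  ultimately have tangent: "sqrt (Q y) \<le> sqrt (Q m) + slope * (y - m)" if "0 \<le> y" for y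
    unfolding Q_def slope_def using sqrt_quadratic_le_tangent assms(5) that by blast
  show ?thesis
  proof (intro exI allI impI)
    fix y :: real assume "0 \<le> y"
    have "sr_outage_threshold Ps Pr Cx g y \<le> (sqrt (Q m) + slope * (y - m) - Pr * y - 1) / Ps"
      unfolding sr_outage_threshold_def Q_eq
      using tangent[OF \<open>0 \<le> y\<close>] assms(1) by (simp add: divide_right_mono)
    also have "\<dots> = sr_outage_threshold Ps Pr Cx g m + (slope - Pr) / Ps * (y - m)"
      unfolding sr_outage_threshold_def Q_eq using assms(1) by (simp add: field_simps)
    finally show "sr_outage_threshold Ps Pr Cx g y \<le>
        sr_outage_threshold Ps Pr Cx g m + (slope - Pr) / Ps * (y - m)" .
  qed
qed

lemma sr_outage_threshold_eq_Psi:
  assumes "0 < Pr * m + 1"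
  shows "sr_outage_threshold Ps Pr Cx (2 powr (2 * r) - 1) m =
    (Pr * m + 1) / Ps * Psi r (Pr * m / (Pr * m + 1) * Cx)"
proof -
  define g where "g = 2 powr (2 * r) - 1"
  define t where "t = Pr * m / (Pr * m + 1) * Cx"
  have "Pr * m * Cx = (Pr * m + 1) * t"
    unfolding t_def using assms by simp
  then have "(1 + g) * (Pr * m + 1)\<^sup>2 - g * (Pr * m * Cx)\<^sup>2 = (Pr * m + 1)\<^sup>2 * (1 + g * (1 - t\<^sup>2))"
    by (simp add: power2_eq_square algebra_simps)
  then have "sqrt ((1 + g) * (Pr * m + 1)\<^sup>2 - g * (Pr * m * Cx)\<^sup>2) =
      (Pr * m + 1) * sqrt (1 + g * (1 - t\<^sup>2))"
    using assms by (simp add: real_sqrt_mult)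
  then show ?thesis
    unfolding sr_outage_threshold_def Psi_def g_def[symmetric] t_def[symmetric]
    by (simp add: field_simps)
qed

lemma P_sr_le_exponential_cdf_threshold:
  assumes "0 < Ps" "0 \<le> Pr" "0 < pisr" "0 < pirr" "0 \<le> r" "\<bar>Cx\<bar> \<le> 1"
  shows "P_sr Ps pisr pirr r Pr Cx \<le>
    1 - exp (- sr_outage_threshold Ps Pr Cx (2 powr (2 * r) - 1) pirr / pisr)"
proof -
  define c where "c = sr_outage_threshold Ps Pr Cx (2 powr (2 * r) - 1)"
  define l where "l = 1 / pisr"
  define M1 where "M1 = density lborel (exponential_density l)"
  define M2 where "M2 = density lborel (exponential_density (1 / pirr))"
  have "0 < l" using assms(3) unfolding l_def by simp
  have "0 \<le> 2 powr (2 * r) - 1" using assms(5) by (simp add: ge_one_powr_ge_zero)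
  then have c_nonneg: "0 \<le> c y" if "0 \<le> y" for y
    unfolding c_def using assms that by (intro sr_outage_threshold_nonneg) simp_all
  obtain k where c_super: "\<And>y. 0 \<le> y \<Longrightarrow> c y \<le> c pirr + k * (y - pirr)"
    using sr_outage_threshold_supergradient[OF assms(1,2) \<open>0 \<le> 2 powr (2 * r) - 1\<close> assms(6),
        of pirr] assms(4) unfolding c_def by auto
  define b where "b = l * exp (- l * c pirr) * k"
  define a where "a = 1 - exp (- l * c pirr) - b * pirr"
  have cdf_le: "erlang_CDF 0 l (c y) \<le> a + b * y" if "0 \<le> y" for y
    using erlang_CDF_0_le_tangent[OF \<open>0 < l\<close> c_nonneg[OF that] c_super[OF that]]
    unfolding a_def b_def by (simp add: algebra_simps)
  interpret pair_prob_space M1 M2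
    unfolding M1_def M2_def pair_prob_space_def pair_sigma_finite_def
    using \<open>0 < l\<close> assms(4)
    by (simp add: prob_space_exponential_density prob_space_imp_sigma_finite)
  define S where "S = {(gsr, grr). R_sr Ps Pr Cx gsr grr < r}"
  define T where "T = {(gsr, grr). 0 \<le> grr \<longrightarrow> gsr \<le> c grr}"
  have "S \<subseteq> T"
    unfolding S_def T_def c_def using R_sr_less_imp_le_sr_outage_threshold assms(1,2,6) by auto
  have "T \<in> sets (M1 \<Otimes>\<^sub>M M2)"
  proof -
    have "c \<in> borel_measurable borel" unfolding c_def sr_outage_threshold_def by measurable
    then have "{p \<in> space (borel \<Otimes>\<^sub>M borel). 0 \<le> snd p \<longrightarrow> fst p \<le> c (snd p)}
        \<in> sets (borel \<Otimes>\<^sub>M borel)"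
      by measurable
    moreover have "sets (M1 \<Otimes>\<^sub>M M2) = sets (borel \<Otimes>\<^sub>M borel)"
      by (rule sets_pair_measure_cong) (simp_all add: M1_def M2_def)
    ultimately show ?thesis by (simp add: T_def space_pair_measure case_prod_unfold)
  qed
  have grr_nonneg: "AE y in M2. 0 \<le> y"
    unfolding M2_def by (subst AE_density) (auto intro!: AE_I2 simp: exponential_density_def)
  have "P_sr Ps pisr pirr r Pr Cx = measure (M1 \<Otimes>\<^sub>M M2) S"
    unfolding P_sr_def gain_law_def S_def M1_def M2_def l_def ..
  also have "\<dots> \<le> measure (M1 \<Otimes>\<^sub>M M2) T"
    using \<open>S \<subseteq> T\<close> \<open>T \<in> sets (M1 \<Otimes>\<^sub>M M2)\<close> by (rule finite_measure_mono)
  also have "\<dots> \<le> a + b * (1 / (1 / pirr))"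
  proof (rule measure_pair_le_affine_section_bound)
    show "has_bochner_integral M2 (\<lambda>y. y) (1 / (1 / pirr))"
      unfolding M2_def using assms(4) by (intro has_bochner_integral_exponential_mean) simp
    show "AE y in M2. emeasure M1 ((\<lambda>x. (x, y)) -` T) \<le> ennreal (a + b * y)"
      using grr_nonneg
    proof eventually_elim
      case (elim y)
      then have "(\<lambda>x. (x, y)) -` T = {..c y}" by (auto simp: T_def)
      then show ?case
        using cdf_le[OF elim] \<open>0 < l\<close> by (simp add: M1_def emeasure_erlang_density ennreal_leI)
    qed
    show "AE y in M2. 0 \<le> a + b * y"
    proof (rule AE_mp[OF grr_nonneg], intro AE_I2 impI)
      fix y :: real assume "0 \<le> y"
      have "0 \<le> erlang_CDF 0 l (c y)" using \<open>0 < l\<close> by simp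
      then show "0 \<le> a + b * y" using cdf_le[OF \<open>0 \<le> y\<close>] by linarith
    qed
    show "pair_prob_space M1 M2" by unfold_locales
  qed fact
  also have "\<dots> = 1 - exp (- c pirr / pisr)"
    unfolding a_def b_def l_def using assms(4) by simp
  finally show ?thesis
    unfolding c_def .
qed

theorem lemma4:
  fixes Ps Pr pisr pirr r Cx :: real
  assumes "Ps > 0" and "Pr > 0" and "pisr > 0" and "pirr > 0" and "r > 0"
    and "0 \<le> Cx" and "Cx < 1"
  shows "P_sr Ps pisr pirr r Pr Cx \<le>
    1 - exp (- ((Pr * pirr + 1) / (Ps * pisr)) *
             Psi r ((Pr * pirr / (Pr * pirr + 1)) * Cx))"
proof -
  have "P_sr Ps pisr pirr r Pr Cx \<le>
      1 - exp (- sr_outage_threshold Ps Pr Cx (2 powr (2 * r) - 1) pirr / pisr)"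
    using assms by (intro P_sr_le_exponential_cdf_threshold) auto
  also have "sr_outage_threshold Ps Pr Cx (2 powr (2 * r) - 1) pirr =
      (Pr * pirr + 1) / Ps * Psi r (Pr * pirr / (Pr * pirr + 1) * Cx)"
    using assms by (intro sr_outage_threshold_eq_Psi) (simp add: add_pos_pos)
  finally show ?thesis by simp
qed

end
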